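(* Let $X$ be an exponential vector space over a field $K$. A subset of $X\smallsetminus X_0$ is a basis of $X\smallsetminus X_0$ if and only if it is a minimal generating subset of $X\smallsetminus X_0$ (i.e. it generates $X\smallsetminus X_0$ and no proper subset of it generates $X\smallsetminus X_0$).
   Context: An exponential vector space (evs) over a field $K$ is a partially ordered set $(X,\leq)$ with a binary operation $+$ on $X$ and a map $K\times X\to X$, $(\alpha,x)\mapsto \alpha x$, such that: (A1) $(X,+)$ is a commutative semigroup with identity $\theta$; (A2) $x\leq y$ implies $x+z\leq y+z$ and $\alpha x\leq \alpha y$ for all $z\in X$, $\alpha\in K$; (A3) $\alpha(x+y)=\alpha x+\alpha y$, $\alpha(\beta x)=(\alpha\beta)x$, $(\alpha+\beta)x\leq \alpha x+\beta x$, $1x=x$; (A4) $\alpha x=\theta$ iff $\alpha=0$ or $x=\theta$; (A5) $x+(-1)x=\theta$ iff $x\in X_0$, where $X_0:=\{z\in X: y\not\leq z \text{ for all } y\in X\smallsetminus\{z\}\}$ (the set of minimal elements, called the primitive space; it is a vector space over $K$); (A6) for each $x\in X$ there is $p\in X_0$ with $p\leq x$. For $x\in X\smallsetminus X_0$ let $L(x):=\{z\in X: z\geq \alpha x+p \text{ for some } \alpha\in K\smallsetminus\{0\},\ p\in X_0\}$. A subset $B\subseteq X\smallsetminus X_0$ generates $X\smallsetminus X_0$ if $X\smallsetminus X_0=\bigcup_{b\in B}L(b)$. Elements $x,y\in X\smallsetminus X_0$ are orderly dependent if $x\in L(y)$ or $y\in L(x)$, and orderly independent otherwise; $B\subseteq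 X\smallsetminus X_0$ is orderly independent if any two distinct members of $B$ are orderly independent. A basis of $X\smallsetminus X_0$ is an orderly independent subset of $X\smallsetminus X_0$ that generates $X\smallsetminus X_0$. *)

theory Defs
  imports Main
begin

text \<open>An exponential vector space over a field 'k is modelled on the whole carrier type 'x,
 with order le, addition add, identity zero (theta) and scalar multiplication smul.\<close>

definition primitive :: "('x \<Rightarrow> 'x \<Rightarrow> bool) \<Rightarrow> 'x set" where
  "primitive le = {z. \<forall>y. y \<noteq> z \<longrightarrow> \<not> le y z}"

definition evs :: "('x \<Rightarrow> 'x \<Rightarrow> bool) \<Rightarrow> ('x \<Rightarrow> 'x \<Rightarrow> 'x) \<Rightarrow> 'x
                    \<Rightarrow> ('k::field \<Rightarrow> 'x \<Rightarrow> 'x) \<Rightarrow> bool" where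
  "evs le add zero smul \<longleftrightarrow>
     \<comment> \<open>partial order\<close>
     (\<forall>x. le x x) \<and> (\<forall>x y. le x y \<and> le y x \<longrightarrow> x = y) \<and>
     (\<forall>x y z. le x y \<and> le y z \<longrightarrow> le x z) \<and>
     \<comment> \<open>(A1)\<close>
     (\<forall>x y z. add (add x y) z = add x (add y z)) \<and> (\<forall>x y. add x y = add y x) \<and>
     (\<forall>x. add x zero = x) \<and>
     \<comment> \<open>(A2)\<close>
     (\<forall>x y z. le x y \<longrightarrow> le (add x z) (add y z)) \<and>
     (\<forall>x y a. le x y \<longrightarrow> le (smul a x) (smul a y)) \<and>
     \<comment> \<open>(A3)\<close>
     (\<forall>a x y. smul a (add x y) = add (smul a x) (smul a y)) \<and>
     (\<forall>a b x. smul a (smul b x) = smul (a * b) x) \<and>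
     (\<forall>a b x. le (smul (a + b) x) (add (smul a x) (smul b x))) \<and>
     (\<forall>x. smul 1 x = x) \<and>
     \<comment> \<open>(A4)\<close>
     (\<forall>a x. smul a x = zero \<longleftrightarrow> a = 0 \<or> x = zero) \<and>
     \<comment> \<open>(A5)\<close>
     (\<forall>x. add x (smul (-1) x) = zero \<longleftrightarrow> x \<in> primitive le) \<and>
     \<comment> \<open>(A6)\<close>
     (\<forall>x. \<exists>p\<in>primitive le. le p x)"

definition Lset :: "('x \<Rightarrow> 'x \<Rightarrow> bool) \<Rightarrow> ('x \<Rightarrow> 'x \<Rightarrow> 'x)
                    \<Rightarrow> ('k::field \<Rightarrow> 'x \<Rightarrow> 'x) \<Rightarrow> 'x \<Rightarrow> 'x set" where
  "Lset le add smul x =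
     {z. \<exists>a p. a \<noteq> 0 \<and> p \<in> primitive le \<and> le (add (smul a x) p) z}"

definition generates :: "('x \<Rightarrow> 'x \<Rightarrow> bool) \<Rightarrow> ('x \<Rightarrow> 'x \<Rightarrow> 'x)
                    \<Rightarrow> ('k::field \<Rightarrow> 'x \<Rightarrow> 'x) \<Rightarrow> 'x set \<Rightarrow> bool" where
  "generates le add smul B \<longleftrightarrow>
     B \<subseteq> - primitive le \<and> - primitive le = (\<Union>b\<in>B. Lset le add smul b)"

definition orderly_independent :: "('x \<Rightarrow> 'x \<Rightarrow> bool) \<Rightarrow> ('x \<Rightarrow> 'x \<Rightarrow> 'x)
                    \<Rightarrow> ('k::field \<Rightarrow> 'x \<Rightarrow> 'x) \<Rightarrow> 'x set \<Rightarrow> bool" where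
  "orderly_independent le add smul B \<longleftrightarrow>
     B \<subseteq> - primitive le \<and>
     (\<forall>x\<in>B. \<forall>y\<in>B. x \<noteq> y \<longrightarrow> x \<notin> Lset le add smul y \<and> y \<notin> Lset le add smul x)"

definition is_basis :: "('x \<Rightarrow> 'x \<Rightarrow> bool) \<Rightarrow> ('x \<Rightarrow> 'x \<Rightarrow> 'x)
                    \<Rightarrow> ('k::field \<Rightarrow> 'x \<Rightarrow> 'x) \<Rightarrow> 'x set \<Rightarrow> bool" where
  "is_basis le add smul B \<longleftrightarrow>
     orderly_independent le add smul B \<and> generates le add smul B"

definition minimal_generating :: "('x \<Rightarrow> 'x \<Rightarrow> bool) \<Rightarrow> ('x \<Rightarrow> 'x \<Rightarrow> 'x)
                    \<Rightarrow> ('k::field \<Rightarrow> 'x \<Rightarrow> 'x) \<Rightarrow> 'x set \<Rightarrow> bool" where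
  "minimal_generating le add smul B \<longleftrightarrow>
     generates le add smul B \<and> (\<forall>C. C \<subset> B \<longrightarrow> \<not> generates le add smul C)"

end

theory Submission
  imports Defs
begin

text \<open>Since primitive elements are closed under addition and scalar multiplication, the sets
  \<open>L(x)\<close> are transitive: \<open>y \<in> L(x)\<close> implies \<open>L(y) \<subseteq> L(x)\<close>. Hence a generator lying in
  \<open>L\<close> of another generator is redundant, so a minimal generating set is orderly independent.
  Conversely, in an orderly independent generating set \<open>B\<close> a member \<open>b\<close> lies in no \<open>L(c)\<close> with
  \<open>c \<in> B - {b}\<close>, so no proper subset of \<open>B\<close> covers \<open>b\<close>.\<close>

locale exp_vector_space =
  fixes le :: "'x \<Rightarrow> 'x \<Rightarrow> bool" and add :: "'x \<Rightarrow> 'x \<Rightarrow> 'x" and zero :: 'x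
    and smul :: "'k::field \<Rightarrow> 'x \<Rightarrow> 'x"
  assumes le_trans: "le x y \<Longrightarrow> le y z \<Longrightarrow> le x z"
    and add_assoc: "add (add x y) z = add x (add y z)"
    and add_commute: "add x y = add y x"
    and add_zero: "add x zero = x"
    and add_mono: "le x y \<Longrightarrow> le (add x z) (add y z)"
    and smul_mono: "le x y \<Longrightarrow> le (smul a x) (smul a y)"
    and smul_add: "smul a (add x y) = add (smul a x) (smul a y)"
    and smul_smul: "smul a (smul b x) = smul (a * b) x"
    and smul_eq_zero_iff: "smul a x = zero \<longleftrightarrow> a = 0 \<or> x = zero"
    and add_neg_eq_zero_iff: "add x (smul (-1) x) = zero \<longleftrightarrow> x \<in> primitive le"

lemma evs_imp_exp_vector_space:
  assumes "evs le add zero smul"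
  shows "exp_vector_space le add zero smul"
  using assms unfolding evs_def exp_vector_space_def by (elim conjE) (intro conjI; blast)

context exp_vector_space
begin

lemma primitive_smul:
  assumes "p \<in> primitive le"
  shows "smul a p \<in> primitive le"
proof -
  have "add p (smul (-1) p) = zero"
    using assms add_neg_eq_zero_iff by blast
  then have "smul a (add p (smul (-1) p)) = zero"
    using smul_eq_zero_iff by blast
  then have "add (smul a p) (smul (a * -1) p) = zero"
    by (simp add: smul_add smul_smul)
  then have "add (smul a p) (smul (-1) (smul a p)) = zero"
    by (simp add: smul_smul mult.commute)
  then show ?thesis
    using add_neg_eq_zero_iff by blast
qed

lemma primitive_add:
  assumes p: "p \<in> primitive le" and q: "q \<in> primitive le"
  shows "add p q \<in> primitive le"
proof -
  interpret abel_semigroup add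
    by unfold_locales (fact add_assoc, fact add_commute)
  have "add (add p q) (smul (-1) (add p q)) = add (add p (smul (-1) p)) (add q (smul (-1) q))"
    by (simp add: smul_add ac_simps)
  also have "\<dots> = zero"
  proof -
    have "add p (smul (-1) p) = zero" and "add q (smul (-1) q) = zero"
      using p q add_neg_eq_zero_iff by blast+
    then show ?thesis
      using add_zero by simp
  qed
  finally show ?thesis
    using add_neg_eq_zero_iff by blast
qed

lemma Lset_trans:
  assumes "y \<in> Lset le add smul x" and "z \<in> Lset le add smul y"
  shows "z \<in> Lset le add smul x"
proof -
  obtain a p where a: "a \<noteq> 0" and p: "p \<in> primitive le" and y: "le (add (smul a x) p) y"
    using assms(1) unfolding Lset_def by blast
  obtain b q where b: "b \<noteq> 0" and q: "q \<in> primitive le" and z: "le (add (smul b y) q) z"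
    using assms(2) unfolding Lset_def by blast
  have "add (smul (b * a) x) (add (smul b p) q) = add (smul b (add (smul a x) p)) q"
    by (simp add: smul_add smul_smul add_assoc)
  moreover have "le (add (smul b (add (smul a x) p)) q) (add (smul b y) q)"
    using y by (intro add_mono smul_mono)
  ultimately have "le (add (smul (b * a) x) (add (smul b p) q)) z"
    using z le_trans by metis
  moreover have "add (smul b p) q \<in> primitive le"
    using primitive_add[OF primitive_smul[OF p] q] .
  moreover have "b * a \<noteq> 0"
    using a b by simp
  ultimately show ?thesis
    unfolding Lset_def by blast
qed

lemma generates_Diff_singleton:
  assumes "generates le add smul B" and "y \<in> B" "x \<noteq> y" "x \<in> Lset le add smul y"
  shows "generates le add smul (B - {x})"
proof -
  have "Lset le add smul x \<subseteq> Lset le add smul y"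
    using Lset_trans[OF assms(4)] by blast
  then have "(\<Union>b\<in>B - {x}. Lset le add smul b) = (\<Union>b\<in>B. Lset le add smul b)"
    using assms(2,3) by blast
  moreover have "B - {x} \<subseteq> - primitive le"
    using assms(1) unfolding generates_def by blast
  ultimately show ?thesis
    using assms(1) unfolding generates_def by simp
qed

lemma minimal_generating_imp_orderly_independent:
  assumes "minimal_generating le add smul B"
  shows "orderly_independent le add smul B"
proof -
  have gen: "generates le add smul B"
    and minimal: "\<And>C. C \<subset> B \<Longrightarrow> \<not> generates le add smul C"
    using assms unfolding minimal_generating_def by blast+
  have "x \<notin> Lset le add smul y" if "x \<in> B" "y \<in> B" "x \<noteq> y" for x y
  proof
    assume "x \<in> Lset le add smul y"
    then have "generates le add smul (B - {x})"
      using generates_Diff_singleton[OF gen] that by blast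
    with minimal[of "B - {x}"] \<open>x \<in> B\<close> show False
      by blast
  qed
  then show ?thesis
    using gen unfolding generates_def orderly_independent_def by blast
qed

end

lemma orderly_independent_psubset_not_generates:
  assumes "orderly_independent le add smul B" and "C \<subset> B"
  shows "\<not> generates le add smul C"
proof
  assume "generates le add smul C"
  obtain b where "b \<in> B" "b \<notin> C"
    using assms(2) by blast
  then have "b \<in> - primitive le"
    using assms(1) unfolding orderly_independent_def by blast
  then obtain c where "c \<in> C" "b \<in> Lset le add smul c"
    using \<open>generates le add smul C\<close> unfolding generates_def by blast
  moreover have "c \<in> B" and "c \<noteq> b"
    using \<open>c \<in> C\<close> \<open>b \<notin> C\<close> assms(2) by auto
  ultimately show False
    using assms(1) \<open>b \<in> B\<close> unfolding orderly_independent_def by blast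
qed

theorem mainTheorem2:
  fixes le :: "'x \<Rightarrow> 'x \<Rightarrow> bool" and add :: "'x \<Rightarrow> 'x \<Rightarrow> 'x" and zero :: 'x
    and smul :: "'k::field \<Rightarrow> 'x \<Rightarrow> 'x" and B :: "'x set"
  assumes "evs le add zero smul"
    and "B \<subseteq> - primitive le"
  shows "is_basis le add smul B \<longleftrightarrow> minimal_generating le add smul B"
proof
  assume "is_basis le add smul B"
  then have "orderly_independent le add smul B" and "generates le add smul B"
    unfolding is_basis_def by blast+
  then show "minimal_generating le add smul B"
    unfolding minimal_generating_def
    using orderly_independent_psubset_not_generates by blast
next
  interpret exp_vector_space le add zero smul
    using assms(1) by (rule evs_imp_exp_vector_space)
  assume "minimal_generating le add smul B"
  then have "orderly_independent le add smul B" and "generates le add smul B"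
    using minimal_generating_imp_orderly_independent
    unfolding minimal_generating_def by blast+
  then show "is_basis le add smul B"
    unfolding is_basis_def by blast
qed

end
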